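(* Let $m\ge1$, $q=2^m$, let $n$ be odd, and let $L$ and $\lambda$ be $2$-linear polynomials over $\mathbb F_{q^n}$ such that $L^\prime(\ker\mathrm{Tr})=\lambda^\prime(\ker\mathrm{Tr})=\ker\mathrm{Tr}$ and $\mathrm{Tr}(\lambda^\prime(x))=0$ for all $x\in\mathbb F_{q^n}$. Then both $\mathrm{Tr}(x^{q+1})+L(\lambda(x))$ and $\mathrm{Tr}(x^{q+1})+\lambda(L(x))$ are permutation polynomials of $\mathbb F_{q^n}$.
   Context: $\mathrm{Tr}$ denotes the trace map of $\mathbb F_{q^n}$ over $\mathbb F_q$. A $2$-linear polynomial over $\mathbb F_{q^n}$ has the form $\sum_{j=0}^{mn-1}a_jx^{2^j}$; its adjoint is $\sum_j(a_jx)^{2^{-j}}$, where $y\mapsto y^{2^{-j}}$ is the inverse of $y\mapsto y^{2^j}$ on $\mathbb F_{q^n}$. Polynomials are regarded as maps on $\mathbb F_{q^n}$. *)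

theory Defs
  imports Main
begin

text \<open>The field F_{q^n}, q = 2^m, is modelled as a finite field type 'a with
  CARD('a) = 2^(m*n). Tr is the trace to F_q: Tr x = sum_{i<n} x^(q^i).\<close>

definition trace :: "nat \<Rightarrow> nat \<Rightarrow> 'a::field \<Rightarrow> 'a" where
  "trace q n x = (\<Sum>i<n. x ^ (q ^ i))"

definition lin2 :: "nat \<Rightarrow> (nat \<Rightarrow> 'a::field) \<Rightarrow> 'a \<Rightarrow> 'a" where
  "lin2 N a x = (\<Sum>j<N. a j * x ^ (2 ^ j))"

text \<open>Adjoint: sum_j (a_j x)^(2^(-j)); on a field of order 2^N the inverse of
  y \<mapsto> y^(2^j) is y \<mapsto> y^(2^((N - j) mod N)).\<close>
definition lin2_adj :: "nat \<Rightarrow> (nat \<Rightarrow> 'a::field) \<Rightarrow> 'a \<Rightarrow> 'a" where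
  "lin2_adj N a x = (\<Sum>j<N. (a j * x) ^ (2 ^ ((N - j) mod N)))"

end

(*
  Write q = 2^m, Tr for the trace onto F_q and T for the absolute trace, and let M be
  either composite of the two 2-linear maps. In characteristic 2,
  f(x + u) + f(x) = Tr(x^q u + u^q x + u^(q+1)) + M(u) for f(x) = Tr(x^(q+1)) + M(x),
  so a collision f(x + u) = f(x) forces M(u) into F_q. The duality
  T(L(x) y) = T(x L'(y)) turns the hypotheses on the adjoints into two facts:
  L(v) in F_q implies v in F_q (then T(v (z^q + z)) = 0 for all z), and lambda
  vanishes on F_q. Hence u lies in F_q and M(u) = 0, and the collision equation
  collapses to Tr(u^2) = n u^2 = u^2 = 0, using that n is odd.
*)

theory Submission
  imports Defs "HOL-Computational_Algebra.Polynomial" "HOL-Computational_Algebra.Primes"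
begin

lemma field_power_card_eq_same:
  fixes x :: "'a::{field,finite}"
  shows "x ^ card (UNIV :: 'a set) = x"
proof (cases "x = 0")
  case False
  have "(\<Prod>y\<in>UNIV - {0}. x * y) = \<Prod>(UNIV - {0::'a})"
    by (rule prod.reindex_bij_witness[of _ "\<lambda>y. y / x" "\<lambda>y. x * y"]) (use False in auto)
  then have "x ^ card (UNIV - {0::'a}) * \<Prod>(UNIV - {0::'a}) = \<Prod>(UNIV - {0::'a})"
    by (simp add: prod.distrib)
  then have "x ^ card (UNIV - {0::'a}) = 1"
    by simp
  moreover have "card (UNIV :: 'a set) = Suc (card (UNIV - {0::'a}))"
    using finite_UNIV_card_ge_0[where ?'a = 'a] by (simp add: card_Diff_singleton)
  ultimately show ?thesis
    by (simp only: power_Suc mult_1_right)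
qed (simp add: finite_UNIV_card_ge_0)

lemma CHAR_eq_2_if_card_power_2:
  assumes "card (UNIV :: 'a::{field,finite} set) = 2 ^ N" and "0 < N"
  shows "CHAR('a) = 2"
proof -
  have "(-1::'a) = (-1) ^ card (UNIV :: 'a set)"
    by (rule field_power_card_eq_same[symmetric])
  also have "\<dots> = 1"
    using assms by (simp add: neg_one_even_power)
  finally have minus_one: "(-1::'a) = 1" .
  have "of_nat 2 = (1 - (-1) :: 'a)"
    by simp
  also have "\<dots> = 0"
    by (simp only: minus_one) simp
  finally have char_dvd: "CHAR('a) dvd 2"
    by (simp only: of_nat_eq_0_iff_char_dvd)
  have "0 < CHAR('a)"
    by (rule dvd_pos_nat[OF _ char_dvd]) simp
  moreover have "CHAR('a) \<le> 2"
    by (rule dvd_imp_le[OF char_dvd]) simp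
  ultimately show ?thesis
    using CHAR_not_1[where ?'a = 'a] by linarith
qed

lemma two_eq_zero_CHAR_2:
  assumes "CHAR('a::semiring_1) = 2"
  shows "(2::'a) = 0"
  using of_nat_CHAR[where ?'a = 'a] assms by simp

lemma add_self_CHAR_2:
  assumes "CHAR('a::ring_1) = 2"
  shows "(x::'a) + x = 0"
  using two_eq_zero_CHAR_2[OF assms] by (simp flip: mult_2)

lemma of_nat_odd_CHAR_2:
  assumes "CHAR('a::semiring_1) = 2" and "odd n"
  shows "of_nat n = (1::'a)"
proof -
  obtain j where "n = 2 * j + 1"
    using assms(2) by (rule oddE)
  then show ?thesis
    using two_eq_zero_CHAR_2[OF assms(1)] by simp
qed

lemma power_power_eq_self:
  assumes "(k::'a::monoid_mult) ^ q = k"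
  shows "k ^ (q ^ i) = k"
  by (induction i) (simp_all add: power_mult assms)

lemma trace_sum:
  fixes f :: "'b \<Rightarrow> 'a::field"
  assumes "prime CHAR('a)" and "q = CHAR('a) ^ k"
  shows "trace q n (\<Sum>a\<in>A. f a) = (\<Sum>a\<in>A. trace q n (f a))"
proof -
  have "(\<Sum>a\<in>A. f a) ^ (q ^ i) = (\<Sum>a\<in>A. f a ^ (q ^ i))" for i
    using assms by (intro freshmans_dream_sum'[where n = "k * i"]) (simp_all add: power_mult)
  then show ?thesis
    unfolding trace_def by (simp add: sum.swap[of _ "{..<n}"])
qed

lemma trace_add:
  fixes x y :: "'a::field"
  assumes "prime CHAR('a)" and "q = CHAR('a) ^ k"
  shows "trace q n (x + y) = trace q n x + trace q n y"
proof -
  have "(x + y) ^ (q ^ i) = x ^ (q ^ i) + y ^ (q ^ i)" for i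
    using assms by (intro freshmans_dream'[where n = "k * i"]) (simp_all add: power_mult)
  then show ?thesis
    unfolding trace_def by (simp add: sum.distrib)
qed

lemma trace_frobenius:
  assumes "(x::'a::field) ^ (q ^ n) = x"
  shows "trace q n (x ^ q) = trace q n x"
proof -
  have "trace q n (x ^ q) = (\<Sum>i<n. x ^ (q ^ Suc i))"
    unfolding trace_def by (simp add: power_mult[symmetric] mult.commute)
  also have "\<dots> = (\<Sum>i<Suc n. x ^ (q ^ i)) - x"
    by (simp only: sum.lessThan_Suc_shift) simp
  also have "\<dots> = trace q n x"
    unfolding trace_def using assms by simp
  finally show ?thesis .
qed

lemma trace_frobenius_power:
  fixes x :: "'a::field"
  assumes "\<And>x::'a. x ^ (q ^ n) = x"
  shows "trace q n (x ^ (q ^ e)) = trace q n x"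
proof (induction e)
  case (Suc e)
  have "trace q n (x ^ (q ^ Suc e)) = trace q n ((x ^ (q ^ e)) ^ q)"
    by (simp add: power_mult[symmetric] mult.commute)
  also have "\<dots> = trace q n (x ^ (q ^ e))"
    by (rule trace_frobenius) (rule assms)
  finally show ?case
    using Suc.IH by simp
qed simp

lemma trace_power_eq_self:
  fixes x :: "'a::field"
  assumes "prime CHAR('a)" and "q = CHAR('a) ^ k" and "x ^ (q ^ n) = x"
  shows "trace q n x ^ q = trace q n x"
proof -
  have "trace q n x ^ q = (\<Sum>i<n. (x ^ (q ^ i)) ^ q)"
    unfolding trace_def using assms(1,2) by (intro freshmans_dream_sum') simp_all
  also have "\<dots> = trace q n (x ^ q)"
    unfolding trace_def by (simp add: power_mult[symmetric] mult.commute)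
  finally show ?thesis
    using trace_frobenius[OF assms(3)] by simp
qed

lemma trace_scale:
  assumes "(k::'a::field) ^ q = k"
  shows "trace q n (k * w) = k * trace q n w"
  unfolding trace_def by (simp add: power_mult_distrib power_power_eq_self[OF assms] sum_distrib_left)

lemma trace_of_fixed:
  assumes "(k::'a::field) ^ q = k"
  shows "trace q n k = of_nat n * k"
  unfolding trace_def by (simp add: power_power_eq_self[OF assms])

lemma trace_trans:
  fixes y :: "'a::field"
  assumes "prime CHAR('a)" and "p = CHAR('a) ^ k"
  shows "trace p (m * n) y = trace p m (trace (p ^ m) n y)"
proof -
  have "trace p (m * n) y = (\<Sum>l<n. \<Sum>j\<in>{l * m..<l * m + m}. y ^ (p ^ j))"
    unfolding trace_def by (simp add: sum.nat_group mult.commute)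
  also have "\<dots> = (\<Sum>l<n. \<Sum>i<m. y ^ (p ^ (i + l * m)))"
    using sum.shift_bounds_nat_ivl[of "\<lambda>j. y ^ (p ^ j)" 0 "_ * m" m]
    by (simp add: atLeast0LessThan add.commute)
  also have "\<dots> = (\<Sum>i<m. \<Sum>l<n. (y ^ ((p ^ m) ^ l)) ^ (p ^ i))"
    by (subst sum.swap) (simp add: power_mult[symmetric] power_add mult.commute)
  also have "\<dots> = trace p m (trace (p ^ m) n y)"
    unfolding trace_def using assms
    by (simp add: freshmans_dream_sum'[where n = "k * _"] power_mult)
  finally show ?thesis .
qed

lemma ex_trace_nonzero:
  assumes "card (UNIV :: 'a::{field,finite} set) = q ^ N" and "1 < q" and "0 < N"
  shows "\<exists>z::'a. trace q N z \<noteq> 0"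
proof (rule ccontr)
  assume trace_zero: "\<not> (\<exists>z::'a. trace q N z \<noteq> 0)"
  define p :: "'a poly" where "p = (\<Sum>j<N. monom 1 (q ^ j))"
  have roots: "{x. poly p x = 0} = UNIV"
    using trace_zero by (auto simp: p_def trace_def poly_sum poly_monom)
  have "coeff p (q ^ (N - 1)) = (\<Sum>j<N. if j = N - 1 then 1 else 0)"
    using \<open>1 < q\<close> by (simp add: p_def coeff_sum coeff_monom)
  also have "\<dots> = 1"
    using \<open>0 < N\<close> by simp
  finally have "p \<noteq> 0"
    by auto
  then have "q ^ N \<le> degree p"
    using card_poly_roots_bound[of p] roots assms(1) by simp
  moreover have "degree p \<le> q ^ (N - 1)"
    unfolding p_def
  proof (rule degree_sum_le)
    fix j assume "j \<in> {..<N}"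
    then show "degree (monom (1::'a) (q ^ j)) \<le> q ^ (N - 1)"
      using \<open>1 < q\<close> by (simp add: degree_monom_eq)
  qed simp
  moreover have "q ^ (N - 1) < q ^ N"
    using assms(2,3) by simp
  ultimately show False
    by linarith
qed

lemma trace_form_nondegenerate:
  fixes w :: "'a::{field,finite}"
  assumes "card (UNIV :: 'a set) = q ^ N" and "1 < q" and "0 < N"
    and "\<And>z. trace q N (w * z) = 0"
  shows "w = 0"
proof (rule ccontr)
  assume "w \<noteq> 0"
  obtain z :: 'a where "trace q N z \<noteq> 0"
    using ex_trace_nonzero[OF assms(1-3)] by blast
  moreover have "z = w * (z / w)"
    using \<open>w \<noteq> 0\<close> by simp
  ultimately show False
    using assms(4) by metis
qed

lemma lin2_add:
  assumes "CHAR('a::field) = 2"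
  shows "lin2 N c ((x::'a) + y) = lin2 N c x + lin2 N c y"
proof -
  have "(x + y) ^ (2 ^ j) = x ^ (2 ^ j) + y ^ (2 ^ j)" for j
    using assms by (intro freshmans_dream'[where n = j]) simp_all
  then show ?thesis
    unfolding lin2_def by (simp add: distrib_left sum.distrib)
qed

lemma lin2_zero: "lin2 N c 0 = 0"
  unfolding lin2_def by (simp add: power_0_left)

lemma trace_lin2_adjoint:
  fixes x y :: "'a::field"
  assumes "CHAR('a) = 2" and "\<And>z::'a. z ^ (2 ^ N) = z"
  shows "trace 2 N (lin2 N c x * y) = trace 2 N (x * lin2_adj N c y)"
proof -
  have trace_sum_2: "trace 2 N (\<Sum>j<N. f j) = (\<Sum>j<N. trace 2 N (f j))" for f :: "nat \<Rightarrow> 'a"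
    using assms(1) by (intro trace_sum[where k = 1]) simp_all
  have "trace 2 N (c j * x ^ (2 ^ j) * y) = trace 2 N (x * (c j * y) ^ (2 ^ ((N - j) mod N)))"
    if "j < N" for j
  proof -
    define e where "e = (N - j) mod N"
    have "x ^ (2 ^ j * 2 ^ e) = x"
      using that assms(2) by (cases "j = 0") (simp_all add: e_def flip: power_add)
    then have "(c j * x ^ (2 ^ j) * y) ^ (2 ^ e) = x * (c j * y) ^ (2 ^ e)"
      by (simp add: power_mult_distrib power_mult[symmetric] mult_ac)
    then show ?thesis
      using trace_frobenius_power[of 2 N, OF assms(2)] by (metis e_def)
  qed
  then show ?thesis
    unfolding lin2_def lin2_adj_def
    by (simp add: sum_distrib_left sum_distrib_right trace_sum_2 mult.assoc)
qed

context
  fixes m n :: nat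
  assumes card_eq: "card (UNIV :: 'a::{field,finite} set) = 2 ^ (m * n)"
    and mn_pos: "0 < m * n"
begin

abbreviation Tr :: "'a \<Rightarrow> 'a" where
  "Tr \<equiv> trace (2 ^ m) n"

abbreviation T :: "'a \<Rightarrow> 'a" where
  "T \<equiv> trace 2 (m * n)"

lemma CHAR_eq_2: "CHAR('a) = 2"
  using CHAR_eq_2_if_card_power_2[OF card_eq mn_pos] .

lemma power_2_mn_eq_self: "(x::'a) ^ (2 ^ (m * n)) = x"
  using field_power_card_eq_same[of x] card_eq by simp

lemma power_q_n_eq_self: "(x::'a) ^ ((2 ^ m) ^ n) = x"
  using power_2_mn_eq_self by (simp flip: power_mult)

lemma Tr_add: "Tr (x + y) = Tr x + Tr y"
  using CHAR_eq_2 by (intro trace_add[where k = m]) simp_all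

lemma T_add: "T (x + y) = T x + T y"
  using CHAR_eq_2 by (intro trace_add[where k = 1]) simp_all

lemma Tr_frobenius: "Tr (x ^ 2 ^ m) = Tr x"
  using power_q_n_eq_self by (rule trace_frobenius)

lemma Tr_in_subfield: "Tr x ^ 2 ^ m = Tr x"
  using CHAR_eq_2 power_q_n_eq_self by (intro trace_power_eq_self[where k = m]) simp_all

lemma T_eq_trace_Tr: "T x = trace 2 m (Tr x)"
  using CHAR_eq_2 by (intro trace_trans[where k = 1]) simp_all

lemma T_frobenius_power: "T (x ^ 2 ^ e) = T x"
  using power_2_mn_eq_self by (rule trace_frobenius_power)

lemma T_nondegenerate:
  assumes "\<And>z. T (w * z) = 0"
  shows "w = 0"
  using trace_form_nondegenerate[OF card_eq _ mn_pos assms] by simp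

lemma T_lin2_adjoint: "T (lin2 (m * n) c x * y) = T (x * lin2_adj (m * n) c y)"
  using CHAR_eq_2 power_2_mn_eq_self by (rule trace_lin2_adjoint)

lemma T_mult_ker_Tr:
  assumes "k ^ 2 ^ m = k" and "Tr w = 0"
  shows "T (k * w) = 0"
proof -
  have "T (k * w) = trace 2 m (Tr (k * w))"
    by (rule T_eq_trace_Tr)
  also have "Tr (k * w) = k * Tr w"
    using assms(1) by (rule trace_scale)
  finally show ?thesis
    using assms(2) by (simp add: trace_def power_0_left)
qed

lemma subfield_if_T_frobenius_invariant:
  assumes "\<And>z. T (v * z ^ 2 ^ m) = T (v * z)"
  shows "v ^ 2 ^ m = v"
proof -
  define y where "y = v ^ (2 ^ m) ^ (n - 1)"
  have "0 < n"
    using mn_pos by simp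
  then have "(2 ^ m) ^ (n - 1) * 2 ^ m = ((2::nat) ^ m) ^ n"
    by (rule power_minus_mult)
  then have y_frob: "y ^ 2 ^ m = v"
    using power_q_n_eq_self[of v] by (simp add: y_def flip: power_mult)
  have "T ((y - v) * z) = 0" for z
  proof -
    have "T (y * z) = T ((y * z) ^ 2 ^ m)"
      by (rule T_frobenius_power[symmetric])
    also have "\<dots> = T (v * z)"
      by (simp add: power_mult_distrib y_frob assms)
    finally show ?thesis
      using CHAR_eq_2 by (simp add: minus_CHAR_2 distrib_right T_add add_self_CHAR_2)
  qed
  then have "y = v"
    using T_nondegenerate by fastforce
  then show ?thesis
    using y_frob by simp
qed

lemma subfield_if_lin2_subfield:
  assumes "{x. Tr x = 0} \<subseteq> lin2_adj (m * n) c ` {x. Tr x = 0}"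
    and "lin2 (m * n) c v ^ 2 ^ m = lin2 (m * n) c v"
  shows "v ^ 2 ^ m = v"
proof (rule subfield_if_T_frobenius_invariant)
  fix z
  have "Tr (z ^ 2 ^ m + z) = 0"
    using CHAR_eq_2 by (simp add: Tr_add Tr_frobenius add_self_CHAR_2)
  then obtain w where "Tr w = 0" and w: "z ^ 2 ^ m + z = lin2_adj (m * n) c w"
    using assms(1) by blast
  have "T (v * z ^ 2 ^ m) + T (v * z) = T (v * lin2_adj (m * n) c w)"
    by (simp only: w[symmetric] distrib_left T_add)
  also have "\<dots> = T (lin2 (m * n) c v * w)"
    by (rule T_lin2_adjoint[symmetric])
  also have "\<dots> = 0"
    using assms(2) \<open>Tr w = 0\<close> by (rule T_mult_ker_Tr)
  finally show "T (v * z ^ 2 ^ m) = T (v * z)"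
    using CHAR_eq_2 by (simp add: add_eq_0_iff2 uminus_CHAR_2)
qed

lemma lin2_subfield_eq_0:
  assumes "\<And>x. Tr (lin2_adj (m * n) c x) = 0" and "k ^ 2 ^ m = k"
  shows "lin2 (m * n) c k = 0"
proof (rule T_nondegenerate)
  fix z
  have "T (lin2 (m * n) c k * z) = T (k * lin2_adj (m * n) c z)"
    by (rule T_lin2_adjoint)
  also have "\<dots> = 0"
    using assms(2,1) by (rule T_mult_ker_Tr)
  finally show "T (lin2 (m * n) c k * z) = 0" .
qed

lemma bij_Tr_quadratic_plus_additive:
  fixes M :: "'a \<Rightarrow> 'a"
  assumes "odd n"
    and M_add: "\<And>x y. M (x + y) = M x + M y"
    and M_subfield: "\<And>u. M u ^ 2 ^ m = M u \<Longrightarrow> u ^ 2 ^ m = u \<and> M u = 0"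
  shows "bij (\<lambda>x. Tr (x ^ (2 ^ m + 1)) + M x)"
proof -
  let ?f = "\<lambda>x. Tr (x ^ (2 ^ m + 1)) + M x"
  have difference_zero: "u = 0" if "?f (x + u) = ?f x" for x u
  proof -
    let ?D = "Tr (x ^ 2 ^ m * u + u ^ 2 ^ m * x + u ^ (2 ^ m + 1))"
    have "(x + u) ^ 2 ^ m = x ^ 2 ^ m + u ^ 2 ^ m"
      using CHAR_eq_2 by (intro freshmans_dream'[where n = m]) simp_all
    then have "(x + u) ^ (2 ^ m + 1) = x ^ (2 ^ m + 1) + (x ^ 2 ^ m * u + u ^ 2 ^ m * x + u ^ (2 ^ m + 1))"
      by (simp add: power_add algebra_simps)
    then have "Tr ((x + u) ^ (2 ^ m + 1)) = Tr (x ^ (2 ^ m + 1)) + ?D"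
      by (simp only: Tr_add)
    with that M_add have "?D + M u = 0"
      by (simp add: add.assoc)
    then have "M u = ?D"
      using CHAR_eq_2 by (simp add: add_eq_0_iff2 uminus_CHAR_2)
    then have "M u ^ 2 ^ m = M u"
      by (simp only: Tr_in_subfield)
    then have u_subfield: "u ^ 2 ^ m = u" and "M u = 0"
      using M_subfield by blast+
    then have "?D = 0"
      using \<open>M u = ?D\<close> by simp
    have "?D = Tr (u * x ^ 2 ^ m) + Tr (u * x) + Tr (u * u)"
      using u_subfield by (simp add: Tr_add power_add mult.commute)
    also have "\<dots> = u * (Tr (x ^ 2 ^ m) + Tr x) + u * Tr u"
      using u_subfield by (simp add: trace_scale distrib_left)
    also have "\<dots> = u * u"
      using CHAR_eq_2 u_subfield \<open>odd n\<close>
      by (simp add: Tr_frobenius add_self_CHAR_2 trace_of_fixed of_nat_odd_CHAR_2)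
    finally show "u = 0"
      using \<open>?D = 0\<close> by simp
  qed
  have "inj ?f"
  proof (rule injI)
    fix x y
    assume "?f x = ?f y"
    then have "?f (x + (y - x)) = ?f x"
      by simp
    then have "y - x = 0"
      by (rule difference_zero)
    then show "x = y"
      by simp
  qed
  then show ?thesis
    by (simp add: bij_def finite_UNIV_inj_surj)
qed

end

theorem mainTheorem8:
  fixes m n :: nat and a b :: "nat \<Rightarrow> 'a::{field,finite}"
  assumes "m \<ge> 1" and "odd n"
    and "card (UNIV :: 'a set) = 2 ^ (m * n)"
    and "lin2_adj (m * n) a ` {x. trace (2 ^ m) n x = 0} = {x. trace (2 ^ m) n x = 0}"
    and "lin2_adj (m * n) b ` {x. trace (2 ^ m) n x = 0} = {x. trace (2 ^ m) n x = 0}"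
    and "\<forall>x. trace (2 ^ m) n (lin2_adj (m * n) b x) = 0"
  shows "bij (\<lambda>x. trace (2 ^ m) n (x ^ (2 ^ m + 1)) + lin2 (m * n) a (lin2 (m * n) b x)) \<and>
         bij (\<lambda>x. trace (2 ^ m) n (x ^ (2 ^ m + 1)) + lin2 (m * n) b (lin2 (m * n) a x))"
proof
  have "0 < m * n"
    using assms(1,2) by (simp add: odd_pos)
  note field_size = assms(3) this
  note lin2_additive = lin2_add[OF CHAR_eq_2[OF field_size]]
  note subfield_a = subfield_if_lin2_subfield[OF field_size equalityD2[OF assms(4)]]
  note subfield_b = subfield_if_lin2_subfield[OF field_size equalityD2[OF assms(5)]]
  note b_vanishes = lin2_subfield_eq_0[OF field_size assms(6)[rule_format]]
  show "bij (\<lambda>x. trace (2 ^ m) n (x ^ (2 ^ m + 1)) + lin2 (m * n) a (lin2 (m * n) b x))"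
  proof (rule bij_Tr_quadratic_plus_additive[OF field_size assms(2)])
    fix u
    assume "lin2 (m * n) a (lin2 (m * n) b u) ^ 2 ^ m = lin2 (m * n) a (lin2 (m * n) b u)"
    then have "lin2 (m * n) b u ^ 2 ^ m = lin2 (m * n) b u"
      by (rule subfield_a)
    then have "u ^ 2 ^ m = u"
      by (rule subfield_b)
    then show "u ^ 2 ^ m = u \<and> lin2 (m * n) a (lin2 (m * n) b u) = 0"
      by (simp add: b_vanishes lin2_zero)
  qed (simp add: lin2_additive)
  show "bij (\<lambda>x. trace (2 ^ m) n (x ^ (2 ^ m + 1)) + lin2 (m * n) b (lin2 (m * n) a x))"
  proof (rule bij_Tr_quadratic_plus_additive[OF field_size assms(2)])
    fix u
    assume "lin2 (m * n) b (lin2 (m * n) a u) ^ 2 ^ m = lin2 (m * n) b (lin2 (m * n) a u)"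
    then have "lin2 (m * n) a u ^ 2 ^ m = lin2 (m * n) a u"
      by (rule subfield_b)
    then show "u ^ 2 ^ m = u \<and> lin2 (m * n) b (lin2 (m * n) a u) = 0"
      by (simp add: subfield_a[of u] b_vanishes)
  qed (simp add: lin2_additive)
qed

end
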